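(* Let $(\mathcal{X},d)$ be a finite metric space with initial forest given by a partition $\mathcal{P}=\{P_1,\dots,P_t\}$ and spanning trees $T_i$ on the parts with edge union $E_t$, and let $\gamma=\gamma(\mathcal{P})$ be its overlap parameter. Let $\textsf{MFC-Approx}$ be the algorithm $\textsf{MultiRepMFC}(R)$ where each $R_i=\{r_i\}$ consists of a single arbitrary point $r_i\in P_i$. Then $\textsf{MFC-Approx}$ returns a spanning tree of weight at most $2$ times the optimal MFC value (a 2-approximation for MFC) and at most $2\gamma$ times the weight of a minimum spanning tree of $G_{\mathcal{X}}$ (a $2\gamma$-approximation for metric MST).
   Context: $(\mathcal{X},d)$ is a finite metric space and $G_{\mathcal{X}}$ is the complete graph on $\mathcal{X}$ with edge weights $w_{\mathcal{X}}(u,v)=d(u,v)$; for an edge set $F$, $w_{\mathcal{X}}(F)=\sum_{e\in F}w_{\mathcal{X}}(e)$. For $A,B\subseteq\mathcal{X}$, $d(A,B)=\min_{a\in A,b\in B}d(a,b)$. An initial forest consists of a partition $\mathcal{P}=\{P_1,\dots,P_t\}$ of $\mathcal{X}$ and, for each $i$, a spanning tree $T_i$ of the complete graph on $P_i$; $E_t$ is the union of their edge sets. The Metric Forest Completion (MFC) problem: find a minimum-weight spanning tree of $G_{\mathcal{X}}$ containing $E_t$. Overlap parameter: with $\mathcal{T}_{\mathcal{X}}$ the set of minimum spanning trees of $G_{\mathcal{X}}$ and $T(\mathcal{P})$ the edges of $T$ with both endpoints in the same part, $\gamma(\mathcal{P})=w_{\mathcal{X}}(E_t)/\max_{T\in\mathcal{T}_{\mathcal{X}}}w_{\mathcal{X}}(T(\mathcal{P}))$.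 Algorithm $\textsf{MultiRepMFC}(R)$, for nonempty $R_i\subseteq P_i$: for each pair $i\ne j$ set $\hat w(v_i,v_j)=\min\{d(P_i,R_j),d(P_j,R_i)\}$ and record a point pair attaining it; compute a minimum spanning tree of the complete graph on $v_1,\dots,v_t$ with weights $\hat w$; return $E_t$ together with the recorded point pairs of the edges of this tree. *)

theory Defs
  imports Complex_Main
begin

definition metric_on :: "'a set \<Rightarrow> ('a \<Rightarrow> 'a \<Rightarrow> real) \<Rightarrow> bool" where
  "metric_on X d \<longleftrightarrow>
     (\<forall>x\<in>X. \<forall>y\<in>X. d x y \<ge> 0 \<and> (d x y = 0 \<longleftrightarrow> x = y) \<and> d x y = d y x) \<and>
     (\<forall>x\<in>X. \<forall>y\<in>X. \<forall>z\<in>X. d x z \<le> d x y + d y z)"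

definition edges_on :: "'b set \<Rightarrow> 'b set set" where
  "edges_on V = {e. \<exists>u v. u \<in> V \<and> v \<in> V \<and> u \<noteq> v \<and> e = {u, v}}"

text \<open>Weight of an undirected edge {u,v} given a symmetric weight function f.\<close>
definition edge_cost :: "('b \<Rightarrow> 'b \<Rightarrow> real) \<Rightarrow> 'b set \<Rightarrow> real" where
  "edge_cost f e = (THE r. \<exists>u v. e = {u, v} \<and> r = f u v)"

definition weight :: "('b set \<Rightarrow> real) \<Rightarrow> 'b set set \<Rightarrow> real" where
  "weight c F = (\<Sum>e\<in>F. c e)"

definition adj :: "'b set set \<Rightarrow> ('b \<times> 'b) set" where
  "adj F = {(u, v). {u, v} \<in> F}"

definition connected_by :: "'b set \<Rightarrow> 'b set set \<Rightarrow> bool" where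
  "connected_by V F \<longleftrightarrow> (\<forall>u\<in>V. \<forall>v\<in>V. (u, v) \<in> (adj F)\<^sup>*)"

definition spanning_tree :: "'b set \<Rightarrow> 'b set set \<Rightarrow> bool" where
  "spanning_tree V F \<longleftrightarrow> F \<subseteq> edges_on V \<and> connected_by V F \<and>
     (\<forall>e\<in>F. \<not> connected_by V (F - {e}))"

definition is_mst :: "'b set \<Rightarrow> ('b set \<Rightarrow> real) \<Rightarrow> 'b set set \<Rightarrow> bool" where
  "is_mst V c F \<longleftrightarrow> spanning_tree V F \<and> (\<forall>F'. spanning_tree V F' \<longrightarrow> weight c F \<le> weight c F')"

definition setdist :: "('a \<Rightarrow> 'a \<Rightarrow> real) \<Rightarrow> 'a set \<Rightarrow> 'a set \<Rightarrow> real" where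
  "setdist d A B = Min {d a b | a b. a \<in> A \<and> b \<in> B}"

definition intra_edges :: "(nat \<Rightarrow> 'a set) \<Rightarrow> nat \<Rightarrow> 'a set set \<Rightarrow> 'a set set" where
  "intra_edges P t T = {e \<in> T. \<exists>i<t. e \<subseteq> P i}"

definition overlap :: "'a set \<Rightarrow> ('a \<Rightarrow> 'a \<Rightarrow> real) \<Rightarrow> (nat \<Rightarrow> 'a set) \<Rightarrow> nat \<Rightarrow> 'a set set \<Rightarrow> real" where
  "overlap X d P t E = weight (edge_cost d) E /
     Max {weight (edge_cost d) (intra_edges P t T) | T. is_mst X (edge_cost d) T}"

definition rep_weight :: "('a \<Rightarrow> 'a \<Rightarrow> real) \<Rightarrow> (nat \<Rightarrow> 'a set) \<Rightarrow> (nat \<Rightarrow> 'a set) \<Rightarrow> nat \<Rightarrow> nat \<Rightarrow> real" where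
  "rep_weight d P R i j = min (setdist d (P i) (R j)) (setdist d (P j) (R i))"

text \<open>Output of MultiRepMFC(R): for a choice pr of recorded attaining point pairs (one per
  unordered index pair) and a minimum spanning tree H of the contracted complete graph on
  {0..<t}, the algorithm returns E_t together with the recorded pairs of the edges of H.\<close>
definition valid_recorded_pairs ::
  "('a \<Rightarrow> 'a \<Rightarrow> real) \<Rightarrow> (nat \<Rightarrow> 'a set) \<Rightarrow> (nat \<Rightarrow> 'a set) \<Rightarrow> nat \<Rightarrow> (nat set \<Rightarrow> 'a set) \<Rightarrow> bool" where
  "valid_recorded_pairs d P R t pr \<longleftrightarrow>
     (\<forall>i<t. \<forall>j<t. i \<noteq> j \<longrightarrow>
        (\<exists>a b. pr {i, j} = {a, b} \<and>
               ((a \<in> P i \<and> b \<in> R j) \<or> (a \<in> P j \<and> b \<in> R i)) \<and>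
               d a b = rep_weight d P R i j))"

definition multirep_output ::
  "('a \<Rightarrow> 'a \<Rightarrow> real) \<Rightarrow> (nat \<Rightarrow> 'a set) \<Rightarrow> (nat \<Rightarrow> 'a set) \<Rightarrow> nat
    \<Rightarrow> (nat set \<Rightarrow> 'a set) \<Rightarrow> nat set set \<Rightarrow> bool" where
  "multirep_output d P R t pr H \<longleftrightarrow>
     valid_recorded_pairs d P R t pr \<and>
     is_mst {0..<t} (edge_cost (rep_weight d P R)) H"

end

theory Submission
  imports Defs
begin

text \<open>Contracting each part P_i to a vertex i, the algorithm returns E_t together with one
  edge per edge of a minimum spanning tree H of the contracted graph, so its weight is
  w(E_t) + w'(H) for the contracted weight w'. The key inequality is w'(H) \<le> w(F) + w(E_t)
  for every edge set F that connects X together with E_t: an edge {p, q} of F from P_i to P_j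
  gives w'(i, j) \<le> d(p, r) \<le> d(p, q) + w(T_j) for any r \<in> R_j, and a union-find pass over F
  that always keeps as root the representative with the larger w(T_j) pays for every tree T_j
  at most once. For F the edges outside E_t of an optimal completion this gives the factor 2;
  for F the inter-part edges of a minimum spanning tree M maximising w(M(P)) it gives the bound
  2 w(E_t) + w(M) - w(M(P)) \<le> 2 \<gamma> w(M). The argument works for arbitrary nonempty
  representative sets R_i \<subseteq> P_i.\<close>

section \<open>Edge sets of complete graphs\<close>

lemma edge_cost_doubleton:
  assumes "f u v = f v u"
  shows "edge_cost f {u, v} = f u v"
  unfolding edge_cost_def
proof (rule the_equality)
  fix r assume "\<exists>u' v'. {u, v} = {u', v'} \<and> r = f u' v'"
  then show "r = f u v" using assms by (auto simp: doubleton_eq_iff)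
qed blast

lemma metric_on_nonneg: "metric_on X d \<Longrightarrow> x \<in> X \<Longrightarrow> y \<in> X \<Longrightarrow> 0 \<le> d x y"
  and metric_on_refl: "metric_on X d \<Longrightarrow> x \<in> X \<Longrightarrow> d x x = 0"
  and metric_on_sym: "metric_on X d \<Longrightarrow> x \<in> X \<Longrightarrow> y \<in> X \<Longrightarrow> d x y = d y x"
  and metric_on_triangle:
    "metric_on X d \<Longrightarrow> x \<in> X \<Longrightarrow> y \<in> X \<Longrightarrow> z \<in> X \<Longrightarrow> d x z \<le> d x y + d y z"
  unfolding metric_on_def by blast+

lemma edge_cost_metric: "metric_on X d \<Longrightarrow> u \<in> X \<Longrightarrow> v \<in> X \<Longrightarrow> edge_cost d {u, v} = d u v"
  by (simp add: edge_cost_doubleton metric_on_sym)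

lemma edges_onE:
  assumes "e \<in> edges_on V"
  obtains u v where "u \<in> V" "v \<in> V" "u \<noteq> v" "e = {u, v}"
  using assms unfolding edges_on_def by blast

lemma doubleton_in_edges_on: "{u, v} \<in> edges_on V \<Longrightarrow> u \<in> V \<and> v \<in> V"
  unfolding edges_on_def by (auto simp: doubleton_eq_iff)

lemma edges_on_mono: "A \<subseteq> B \<Longrightarrow> edges_on A \<subseteq> edges_on B"
  unfolding edges_on_def by blast

lemma edges_on_subset: "e \<in> edges_on V \<Longrightarrow> e \<subseteq> V"
  unfolding edges_on_def by auto

lemma finite_edges_on: "finite V \<Longrightarrow> finite (edges_on V)"
  by (rule finite_subset[of _ "Pow V"]) (auto simp: edges_on_def)

lemma edge_cost_nonneg: "metric_on X d \<Longrightarrow> e \<in> edges_on X \<Longrightarrow> 0 \<le> edge_cost d e"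
  by (elim edges_onE) (simp add: edge_cost_metric metric_on_nonneg)

lemma weight_nonneg: "metric_on X d \<Longrightarrow> K \<subseteq> edges_on X \<Longrightarrow> 0 \<le> weight (edge_cost d) K"
  unfolding weight_def by (meson edge_cost_nonneg subsetD sum_nonneg)

lemma weight_mono:
  assumes "metric_on X d" "K' \<subseteq> edges_on X" "K \<subseteq> K'" "finite K'"
  shows "weight (edge_cost d) K \<le> weight (edge_cost d) K'"
  unfolding weight_def using assms edge_cost_nonneg[OF assms(1)]
  by (intro sum_mono2) (auto simp: subset_iff)

lemma weight_insert: "finite K \<Longrightarrow> e \<notin> K \<Longrightarrow> weight c (insert e K) = c e + weight c K"
  by (simp add: weight_def)

lemma weight_Un_le:
  assumes "metric_on X d" "A \<subseteq> edges_on X" "B \<subseteq> edges_on X" "finite A" "finite B"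
  shows "weight (edge_cost d) (A \<union> B) \<le> weight (edge_cost d) A + weight (edge_cost d) B"
proof -
  have "weight (edge_cost d) (A \<union> B) + weight (edge_cost d) (A \<inter> B)
      = weight (edge_cost d) A + weight (edge_cost d) B"
    unfolding weight_def using assms(4,5) by (rule sum.union_inter)
  moreover have "0 \<le> weight (edge_cost d) (A \<inter> B)" using weight_nonneg assms(1,2) by blast
  ultimately show ?thesis by linarith
qed

lemma weight_Diff: "finite A \<Longrightarrow> B \<subseteq> A \<Longrightarrow> weight c (A - B) = weight c A - weight c B"
  unfolding weight_def by (rule sum_diff)

lemma setdist_eq_Min_image: "setdist d A B = Min ((\<lambda>(a, b). d a b) ` (A \<times> B))"
  unfolding setdist_def by (rule arg_cong[where f = Min]) auto

lemma setdist_le: "finite A \<Longrightarrow> finite B \<Longrightarrow> a \<in> A \<Longrightarrow> b \<in> B \<Longrightarrow> setdist d A B \<le> d a b"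
  unfolding setdist_eq_Min_image by (rule Min_le) auto

lemma setdist_nonneg:
  assumes "metric_on X d" "A \<subseteq> X" "B \<subseteq> X" "finite A" "finite B" "A \<noteq> {}" "B \<noteq> {}"
  shows "0 \<le> setdist d A B"
  unfolding setdist_eq_Min_image using assms metric_on_nonneg[OF assms(1)] by (auto simp: Min_ge_iff)

lemma finite_msts: "finite V \<Longrightarrow> finite {M. is_mst V c M}"
  by (rule finite_subset[of _ "Pow (edges_on V)"])
    (auto simp: is_mst_def spanning_tree_def finite_edges_on)

lemma le_two_ratio_mult:
  fixes A B W s :: real
  assumes "0 < B" "B \<le> A" "B \<le> W" "s \<le> 2 * A + W - B"
  shows "s \<le> 2 * (A / B) * W"
proof -
  have "0 \<le> (W - B) * (2 * A - B)" using assms by (intro mult_nonneg_nonneg) auto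
  then have "(2 * A + W - B) * B \<le> 2 * A * W" by (simp add: algebra_simps)
  then have "2 * A + W - B \<le> 2 * A * W / B" using assms(1) by (simp add: pos_le_divide_eq)
  then show ?thesis using assms(4) by simp
qed

lemma card_filter_split:
  assumes "finite A"
  shows "card A = card {x\<in>A. P x} + card {x\<in>A. \<not> P x}"
proof -
  have "card ({x\<in>A. P x} \<union> {x\<in>A. \<not> P x}) = card {x\<in>A. P x} + card {x\<in>A. \<not> P x}"
    by (rule card_Un_disjoint) (use assms in auto)
  moreover have "{x\<in>A. P x} \<union> {x\<in>A. \<not> P x} = A" by blast
  ultimately show ?thesis by simp
qed

lemma sym_rtrancl_adj: "sym ((adj F)\<^sup>*)"
  by (rule sym_rtrancl) (auto simp: sym_def adj_def insert_commute)

lemma rtrancl_adj_mono: "F \<subseteq> G \<Longrightarrow> (adj F)\<^sup>* \<subseteq> (adj G)\<^sup>*"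
  unfolding adj_def by (rule rtrancl_mono) auto

lemma adj_insert: "adj (insert {u, v} K) = adj K \<union> {(u, v), (v, u)}"
  unfolding adj_def by (auto simp: doubleton_eq_iff)

lemma rtrancl_adj_edges_on:
  assumes "(x, y) \<in> (adj K)\<^sup>*" "K \<subseteq> edges_on X" "x \<in> X"
  shows "y \<in> X"
  using assms by (induction rule: rtrancl_induct) (auto simp: adj_def dest!: doubleton_in_edges_on)

lemma const_on_rtrancl:
  assumes "(x, y) \<in> R\<^sup>*" "\<forall>(x, y)\<in>R. g x = g y"
  shows "g x = g y"
  using assms by (induction rule: rtrancl_induct) auto

lemma connected_by_mono: "connected_by V F \<Longrightarrow> F \<subseteq> G \<Longrightarrow> connected_by V G"
  unfolding connected_by_def using rtrancl_adj_mono by blast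

lemma connected_byI_subset_rtrancl:
  "connected_by V F \<Longrightarrow> adj F \<subseteq> (adj G)\<^sup>* \<Longrightarrow> connected_by V G"
  unfolding connected_by_def using rtrancl_subset_rtrancl by blast

lemma rtrancl_Un_last_step:
  "(x, z) \<in> (A \<union> B)\<^sup>* \<Longrightarrow> (x, z) \<in> A\<^sup>* \<or> (\<exists>y. y \<in> Range B \<and> (y, z) \<in> A\<^sup>*)"
  by (induction rule: rtrancl_induct) (auto intro: rtrancl_into_rtrancl)

lemma rtrancl_adj_insert_doubleton:
  assumes "(x, r) \<in> (adj (insert {q, x} K))\<^sup>*"
  shows "(x, r) \<in> (adj K)\<^sup>* \<or> (q, r) \<in> (adj K)\<^sup>*"
proof -
  have "(x, r) \<in> (adj K \<union> {(q, x), (x, q)})\<^sup>*" using assms adj_insert by metis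
  from rtrancl_Un_last_step[OF this] show ?thesis by auto
qed

text \<open>Removing the first edge {q, x} of a walk leaves a walk from x or from q itself, so
  induction on the edge set charges every edge at most once.\<close>
lemma rtrancl_adj_dist_le_weight:
  assumes "metric_on X d" "finite K" "K \<subseteq> edges_on X" "q \<in> X" "(q, r) \<in> (adj K)\<^sup>*"
  shows "d q r \<le> weight (edge_cost d) K"
  using assms(2-5)
proof (induction K arbitrary: q rule: finite_psubset_induct)
  case (psubset K)
  have rX: "r \<in> X" using rtrancl_adj_edges_on[OF psubset.prems(3,1,2)] .
  from psubset.prems(3) show ?case
  proof (cases rule: converse_rtranclE)
    case base
    then show ?thesis
      using metric_on_refl[OF assms(1) psubset.prems(2)] weight_nonneg[OF assms(1) psubset.prems(1)]
      by simp
  next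
    case (step x)
    define K' where "K' = K - {{q, x}}"
    have qx: "{q, x} \<in> K" using step(1) by (simp add: adj_def)
    then have xX: "x \<in> X" using doubleton_in_edges_on[of q x X] psubset.prems(1) by blast
    have K': "K' \<subset> K" "K' \<subseteq> edges_on X" "K = insert {q, x} K'"
      using qx psubset.prems(1) by (auto simp: K'_def)
    have "weight (edge_cost d) K = edge_cost d {q, x} + weight (edge_cost d) K'"
      unfolding K'(3) using psubset.hyps K'(1) by (intro weight_insert) (auto simp: K'_def)
    then have wK: "weight (edge_cost d) K = d q x + weight (edge_cost d) K'"
      by (simp add: edge_cost_metric[OF assms(1) psubset.prems(2) xX])
    from step(2) have "(x, r) \<in> (adj K')\<^sup>* \<or> (q, r) \<in> (adj K')\<^sup>*"
      unfolding K'(3) by (rule rtrancl_adj_insert_doubleton)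
    then show ?thesis
    proof
      assume "(x, r) \<in> (adj K')\<^sup>*"
      then have "d x r \<le> weight (edge_cost d) K'" using psubset.IH[OF K'(1,2) xX] by blast
      moreover have "d q r \<le> d q x + d x r"
        using metric_on_triangle[OF assms(1) psubset.prems(2) xX rX] .
      ultimately show ?thesis using wK by linarith
    next
      assume "(q, r) \<in> (adj K')\<^sup>*"
      then have "d q r \<le> weight (edge_cost d) K'"
        using psubset.IH[OF K'(1,2) psubset.prems(2)] by blast
      then show ?thesis
        using wK metric_on_nonneg[OF assms(1) psubset.prems(2) xX] by linarith
    qed
  qed
qed

lemma connected_by_obtain_spanning_tree:
  assumes "finite V" "G \<subseteq> edges_on V" "connected_by V G"
  obtains K where "K \<subseteq> G" "spanning_tree V K"
proof -
  have finG: "finite G" using assms finite_edges_on finite_subset by blast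
  obtain K where K: "K \<subseteq> G" "connected_by V K"
    and least: "\<And>K'. K' \<subseteq> G \<and> connected_by V K' \<Longrightarrow> card K \<le> card K'"
    using ex_has_least_nat[of "\<lambda>K. K \<subseteq> G \<and> connected_by V K" G card] assms(3) by blast
  have "\<not> connected_by V (K - {e})" if "e \<in> K" for e
  proof
    assume "connected_by V (K - {e})"
    then have "card K \<le> card (K - {e})" using least K(1) by blast
    moreover have "card (K - {e}) < card K" using that finite_subset[OF K(1) finG] by (rule card_Diff1_less[rotated])
    ultimately show False by linarith
  qed
  then have "spanning_tree V K" using K assms(2) unfolding spanning_tree_def by blast
  with K(1) show thesis by (rule that)
qed
section \<open>Union-find with charges\<close>

text \<open>State of a union-find pass over the edges K, seen through a contraction
  \<phi> of their endpoints to the index set I: \<rho> sends every index to the root of its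
  component in the chosen forest J, roots carry the largest charge c of their component,
  and the contracted weight \<omega> of J is paid for by the weight a of K together with the
  charges of the non-roots.\<close>
definition union_find_inv ::
  "'i set \<Rightarrow> ('x \<Rightarrow> 'i) \<Rightarrow> ('i \<Rightarrow> real) \<Rightarrow> ('i set \<Rightarrow> real) \<Rightarrow> ('x set \<Rightarrow> real)
    \<Rightarrow> 'x set set \<Rightarrow> ('i \<Rightarrow> 'i) \<Rightarrow> 'i set set \<Rightarrow> bool" where
  "union_find_inv I \<phi> c \<omega> a K \<rho> J \<longleftrightarrow>
     (\<forall>x\<in>I. \<rho> x \<in> I \<and> \<rho> (\<rho> x) = \<rho> x \<and> c x \<le> c (\<rho> x) \<and> (x, \<rho> x) \<in> (adj J)\<^sup>*) \<and>
     (\<forall>p q. {p, q} \<in> K \<longrightarrow> \<rho> (\<phi> p) = \<rho> (\<phi> q)) \<and>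
     J \<subseteq> (\<lambda>e. \<phi> ` e) ` K \<and> J \<subseteq> edges_on I \<and>
     card {x\<in>I. \<rho> x \<noteq> x} = card J \<and>
     weight \<omega> J \<le> weight a K + (\<Sum>x\<in>{x\<in>I. \<rho> x \<noteq> x}. c x)"

lemma union_find_invD:
  assumes "union_find_inv I \<phi> c \<omega> a K \<rho> J"
  shows "x \<in> I \<Longrightarrow> \<rho> x \<in> I" "x \<in> I \<Longrightarrow> \<rho> (\<rho> x) = \<rho> x" "x \<in> I \<Longrightarrow> c x \<le> c (\<rho> x)"
    "x \<in> I \<Longrightarrow> (x, \<rho> x) \<in> (adj J)\<^sup>*" "{p, q} \<in> K \<Longrightarrow> \<rho> (\<phi> p) = \<rho> (\<phi> q)"
    "J \<subseteq> (\<lambda>e. \<phi> ` e) ` K" "J \<subseteq> edges_on I" "card {x\<in>I. \<rho> x \<noteq> x} = card J"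
    "weight \<omega> J \<le> weight a K + (\<Sum>x\<in>{x\<in>I. \<rho> x \<noteq> x}. c x)"
  using assms unfolding union_find_inv_def by blast+

lemma union_find_inv_empty: "union_find_inv I \<phi> c \<omega> a {} (\<lambda>x. x) {}"
  unfolding union_find_inv_def by (simp add: weight_def)

lemma union_find_inv_keep:
  assumes inv: "union_find_inv I \<phi> c \<omega> a K \<rho> J"
    and "finite K" "{p, q} \<notin> K" "\<rho> (\<phi> p) = \<rho> (\<phi> q)" "0 \<le> a {p, q}"
  shows "union_find_inv I \<phi> c \<omega> a (insert {p, q} K) \<rho> J"
  using inv assms(2-) unfolding union_find_inv_def
  by (auto simp: weight_insert doubleton_eq_iff)

lemma union_find_inv_edge_same_root:
  assumes inv: "union_find_inv I \<phi> c \<omega> a K \<rho> J"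
    and K_doubletons: "\<forall>e\<in>K. \<exists>x y. e = {x, y}" and "{u, v} \<in> J"
  shows "\<rho> u = \<rho> v"
proof -
  obtain e where "e \<in> K" "{u, v} = \<phi> ` e" using union_find_invD(6)[OF inv] \<open>{u, v} \<in> J\<close> by auto
  moreover obtain x y where "e = {x, y}" using K_doubletons \<open>e \<in> K\<close> by blast
  ultimately have "{x, y} \<in> K" "{u, v} = {\<phi> x, \<phi> y}" by auto
  then show ?thesis using union_find_invD(5)[OF inv] by (auto simp: doubleton_eq_iff)
qed

lemma redirect_root_nonroots:
  assumes root: "\<And>x. x \<in> I \<Longrightarrow> \<rho> x \<in> I \<and> \<rho> (\<rho> x) = \<rho> x"
    and "u \<in> I" "v \<in> I" "\<rho> u \<noteq> \<rho> v"
  shows "{x\<in>I. (if \<rho> x = \<rho> v then \<rho> u else \<rho> x) \<noteq> x} = insert (\<rho> v) {x\<in>I. \<rho> x \<noteq> x}"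
    and "\<rho> v \<notin> {x\<in>I. \<rho> x \<noteq> x}"
proof -
  have "(if \<rho> x = \<rho> v then \<rho> u else \<rho> x) \<noteq> x \<longleftrightarrow> x = \<rho> v \<or> \<rho> x \<noteq> x" if "x \<in> I" for x
    using root[OF that] root[OF \<open>u \<in> I\<close>] root[OF \<open>v \<in> I\<close>] assms(4) by auto
  then show "{x\<in>I. (if \<rho> x = \<rho> v then \<rho> u else \<rho> x) \<noteq> x} = insert (\<rho> v) {x\<in>I. \<rho> x \<noteq> x}"
    using root[OF \<open>u \<in> I\<close>] root[OF \<open>v \<in> I\<close>] assms(4) by auto
  show "\<rho> v \<notin> {x\<in>I. \<rho> x \<noteq> x}" using root[OF \<open>v \<in> I\<close>] by simp
qed

lemma union_find_inv_merge:
  assumes inv: "union_find_inv I \<phi> c \<omega> a K \<rho> J"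
    and "finite I" "finite K" "{p, q} \<notin> K" "\<phi> p \<in> I" "\<phi> q \<in> I"
    and K_doubletons: "\<forall>e\<in>K. \<exists>x y. e = {x, y}"
    and roots: "\<rho> (\<phi> p) \<noteq> \<rho> (\<phi> q)" "c (\<rho> (\<phi> q)) \<le> c (\<rho> (\<phi> p))"
    and charge: "\<omega> {\<phi> p, \<phi> q} \<le> a {p, q} + c (\<phi> q)"
  shows "union_find_inv I \<phi> c \<omega> a (insert {p, q} K)
           (\<lambda>x. if \<rho> x = \<rho> (\<phi> q) then \<rho> (\<phi> p) else \<rho> x) (insert {\<phi> p, \<phi> q} J)"
    (is "union_find_inv _ _ _ _ _ ?K ?\<rho> ?J")
proof -
  let ?u = "\<phi> p" and ?v = "\<phi> q" and ?N = "{x\<in>I. \<rho> x \<noteq> x}"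
  note root = union_find_invD(1-4)[OF inv] and J = union_find_invD(6-9)[OF inv]
  have finJ: "finite J" using J(2) finite_edges_on[OF \<open>finite I\<close>] finite_subset by blast
  have new_edge: "{?u, ?v} \<notin> J" using union_find_inv_edge_same_root[OF inv K_doubletons] roots(1) by blast
  note N = redirect_root_nonroots[OF _ \<open>?u \<in> I\<close> \<open>?v \<in> I\<close> roots(1)] root(1,2)
  have root': "(x, \<rho> x) \<in> (adj ?J)\<^sup>*" "(\<rho> x, x) \<in> (adj ?J)\<^sup>*" if "x \<in> I" for x
  proof -
    have "(adj J)\<^sup>* \<subseteq> (adj ?J)\<^sup>*" by (rule rtrancl_adj_mono) blast
    then show "(x, \<rho> x) \<in> (adj ?J)\<^sup>*" using root(4)[OF that] by blast
    then show "(\<rho> x, x) \<in> (adj ?J)\<^sup>*" by (rule symD[OF sym_rtrancl_adj])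
  qed
  have "(?v, ?u) \<in> (adj ?J)\<^sup>*" by (auto simp: adj_def)
  then have reach: "(x, \<rho> ?u) \<in> (adj ?J)\<^sup>*" if "x \<in> I" "\<rho> x = \<rho> ?v" for x
    using root'(1)[OF that(1)] root'(2)[OF \<open>?v \<in> I\<close>] root'(1)[OF \<open>?u \<in> I\<close>] that(2)
    by (metis rtrancl_trans)
  show ?thesis
    unfolding union_find_inv_def
  proof (intro conjI ballI allI impI)
    fix x assume "x \<in> I"
    show "?\<rho> x \<in> I" using root(1) \<open>x \<in> I\<close> \<open>?u \<in> I\<close> by simp
    show "?\<rho> (?\<rho> x) = ?\<rho> x" using root(2) \<open>x \<in> I\<close> \<open>?u \<in> I\<close> roots(1) by auto
    show "c x \<le> c (?\<rho> x)" using root(3) \<open>x \<in> I\<close> roots(2) by force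
    show "(x, ?\<rho> x) \<in> (adj ?J)\<^sup>*" using root'(1) reach \<open>x \<in> I\<close> by simp
  next
    fix x y assume "{x, y} \<in> ?K"
    then show "?\<rho> (\<phi> x) = ?\<rho> (\<phi> y)"
      using union_find_invD(5)[OF inv, of x y] root(2)[OF \<open>?u \<in> I\<close>] roots(1)
      by (auto simp: doubleton_eq_iff)
  next
    show "?J \<subseteq> (\<lambda>e. \<phi> ` e) ` ?K" using J(1) by auto
    have "?u \<noteq> ?v" using roots(1) by auto
    then show "?J \<subseteq> edges_on I" using J(2) \<open>?u \<in> I\<close> \<open>?v \<in> I\<close> unfolding edges_on_def by blast
    show "card {x\<in>I. ?\<rho> x \<noteq> x} = card ?J" using N finJ new_edge J(3) \<open>finite I\<close> by simp
    show "weight \<omega> ?J \<le> weight a ?K + sum c {x\<in>I. ?\<rho> x \<noteq> x}"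
      using N finJ new_edge J(4) charge root(3)[OF \<open>?v \<in> I\<close>] roots(2) \<open>finite I\<close>
        \<open>finite K\<close> \<open>{p, q} \<notin> K\<close>
      by (simp add: weight_insert)
  qed
qed

text \<open>Merging always redirects the root of the cheaper component, so the charge
  c (\<phi> q) of an added edge is bounded by the charge of a root that stops being one.\<close>
lemma union_find_inv_exists:
  assumes "finite I" "finite K" "K \<subseteq> edges_on X" "\<phi> ` X \<subseteq> I" "\<forall>e\<in>K. 0 \<le> a e"
    and charge: "\<forall>p\<in>X. \<forall>q\<in>X. \<phi> p \<noteq> \<phi> q \<longrightarrow> \<omega> {\<phi> p, \<phi> q} \<le> a {p, q} + c (\<phi> q)"
  shows "\<exists>\<rho> J. union_find_inv I \<phi> c \<omega> a K \<rho> J"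
  using assms(2-5)
proof (induction K rule: finite_induct)
  case empty
  show ?case using union_find_inv_empty by blast
next
  case (insert e K)
  then obtain \<rho> J where inv: "union_find_inv I \<phi> c \<omega> a K \<rho> J" by auto
  obtain p q where e: "e = {p, q}" "p \<in> X" "q \<in> X" using insert.prems(1) by (auto elim: edges_onE)
  have I: "\<phi> p \<in> I" "\<phi> q \<in> I" using e insert.prems(2) by auto
  have K_doubletons: "\<forall>e\<in>K. \<exists>x y. e = {x, y}"
    using insert.prems(1) unfolding edges_on_def by blast
  have new: "{p, q} \<notin> K" "{q, p} \<notin> K" using insert.hyps(2) e(1) by (auto simp: insert_commute)
  consider "\<rho> (\<phi> p) = \<rho> (\<phi> q)"
    | "\<rho> (\<phi> p) \<noteq> \<rho> (\<phi> q)" "c (\<rho> (\<phi> q)) \<le> c (\<rho> (\<phi> p))"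
    | "\<rho> (\<phi> q) \<noteq> \<rho> (\<phi> p)" "c (\<rho> (\<phi> p)) \<le> c (\<rho> (\<phi> q))"
    by fastforce
  then have "\<exists>\<rho> J. union_find_inv I \<phi> c \<omega> a (insert {p, q} K) \<rho> J"
  proof cases
    case 1
    moreover have "0 \<le> a {p, q}" using insert.prems(3) e(1) by simp
    ultimately show ?thesis using union_find_inv_keep[OF inv insert.hyps(1) new(1)] by blast
  next
    case 2
    then have "\<phi> p \<noteq> \<phi> q" by auto
    then have "\<omega> {\<phi> p, \<phi> q} \<le> a {p, q} + c (\<phi> q)" using charge e(2,3) by blast
    with 2 show ?thesis using union_find_inv_merge[OF inv assms(1) insert.hyps(1) new(1) I K_doubletons]
      by blast
  next
    case 3
    then have "\<phi> q \<noteq> \<phi> p" by auto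
    then have "\<omega> {\<phi> q, \<phi> p} \<le> a {q, p} + c (\<phi> p)" using charge e(2,3) by blast
    with 3 have "\<exists>\<rho> J. union_find_inv I \<phi> c \<omega> a (insert {q, p} K) \<rho> J"
      using union_find_inv_merge[OF inv assms(1) insert.hyps(1) new(2) I(2,1) K_doubletons] by blast
    then show ?thesis by (simp add: insert_commute)
  qed
  then show ?case using e(1) by simp
qed

lemma union_find_inv_rtrancl:
  assumes "union_find_inv I \<phi> c \<omega> a K \<rho> J" "(x, y) \<in> (adj K)\<^sup>*"
  shows "\<rho> (\<phi> x) = \<rho> (\<phi> y)"
  using assms(2) by (rule const_on_rtrancl) (auto simp: adj_def union_find_invD(5)[OF assms(1)])

lemma union_find_inv_single_root:
  assumes inv: "union_find_inv I \<phi> c \<omega> a K \<rho> J" and "finite I" "i \<in> I"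
    and single: "\<forall>j\<in>I. \<rho> j = \<rho> i"
  shows "connected_by I J" "card I = card J + 1"
proof -
  note root = union_find_invD(1,2,4)[OF inv]
  have "(j, k) \<in> (adj J)\<^sup>*" if "j \<in> I" "k \<in> I" for j k
  proof -
    have "(j, \<rho> i) \<in> (adj J)\<^sup>*" using root(3)[OF that(1)] single that(1) by simp
    moreover have "(\<rho> i, k) \<in> (adj J)\<^sup>*"
      using symD[OF sym_rtrancl_adj root(3)[OF that(2)]] single that(2) by simp
    ultimately show ?thesis by (rule rtrancl_trans)
  qed
  then show "connected_by I J" unfolding connected_by_def by blast
  have "{j\<in>I. \<rho> j = j} = {\<rho> i}" using root[OF \<open>i \<in> I\<close>] single by auto
  moreover have "card I = card {j\<in>I. \<rho> j = j} + card {j\<in>I. \<rho> j \<noteq> j}"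
    using \<open>finite I\<close> by (rule card_filter_split)
  ultimately show "card I = card J + 1" using union_find_invD(8)[OF inv] by simp
qed

lemma union_find_inv_exists_id:
  assumes "finite V" "K \<subseteq> edges_on V"
  obtains \<rho> J where "union_find_inv V (\<lambda>x. x) (\<lambda>_. 0) (\<lambda>_. 0) (\<lambda>_. 0) K \<rho> J"
proof -
  have "finite K" using assms finite_edges_on finite_subset by blast
  have "\<exists>\<rho> J. union_find_inv V (\<lambda>x. x) (\<lambda>_. 0) (\<lambda>_. 0) (\<lambda>_. 0) K \<rho> J"
    by (rule union_find_inv_exists[OF assms(1) \<open>finite K\<close> assms(2)]) auto
  with that show thesis by blast
qed

lemma union_find_inv_id_connected:
  assumes inv: "union_find_inv V (\<lambda>x. x) c \<omega> a K \<rho> J"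
    and "finite V" "v \<in> V" "connected_by V K"
  shows "J \<subseteq> K" "connected_by V J" "card V = card J + 1"
proof -
  show "J \<subseteq> K" using union_find_invD(6)[OF inv] by simp
  have "\<forall>j\<in>V. \<rho> j = \<rho> v"
  proof
    fix j assume "j \<in> V"
    with assms(3,4) have "(j, v) \<in> (adj K)\<^sup>*" unfolding connected_by_def by blast
    then show "\<rho> j = \<rho> v" using union_find_inv_rtrancl[OF inv, of j v] by simp
  qed
  with union_find_inv_single_root[OF inv assms(2,3)]
  show "connected_by V J" "card V = card J + 1" by blast+
qed

section \<open>Counting edges of trees\<close>

lemma connected_by_card_le:
  assumes "finite V" "K \<subseteq> edges_on V" "connected_by V K"
  shows "card V \<le> card K + 1"
proof (cases "V = {}")
  case False
  then obtain v where "v \<in> V" by blast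
  obtain \<rho> J where inv: "union_find_inv V (\<lambda>x. x) (\<lambda>_. 0) (\<lambda>_. 0) (\<lambda>_. 0) K \<rho> J"
    using union_find_inv_exists_id[OF assms(1,2)] .
  note J = union_find_inv_id_connected[OF inv assms(1) \<open>v \<in> V\<close> assms(3)]
  have "card J \<le> card K"
    using J(1) finite_subset[OF assms(2) finite_edges_on[OF assms(1)]] by (rule card_mono[rotated])
  with J(3) show ?thesis by linarith
qed simp

lemma spanning_tree_card:
  assumes "finite V" "V \<noteq> {}" "spanning_tree V K"
  shows "card K + 1 = card V"
proof -
  obtain v where "v \<in> V" using assms(2) by blast
  have K: "K \<subseteq> edges_on V" "connected_by V K" using assms(3) unfolding spanning_tree_def by auto
  obtain \<rho> J where inv: "union_find_inv V (\<lambda>x. x) (\<lambda>_. 0) (\<lambda>_. 0) (\<lambda>_. 0) K \<rho> J"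
    using union_find_inv_exists_id[OF assms(1) K(1)] .
  note J = union_find_inv_id_connected[OF inv assms(1) \<open>v \<in> V\<close> K(2)]
  have "K \<subseteq> J"
  proof (rule ccontr)
    assume "\<not> K \<subseteq> J"
    then obtain e where "e \<in> K" "e \<notin> J" by blast
    then have "J \<subseteq> K - {e}" using J(1) by blast
    then have "connected_by V (K - {e})" by (rule connected_by_mono[OF J(2)])
    then show False using assms(3) \<open>e \<in> K\<close> unfolding spanning_tree_def by blast
  qed
  with J(1,3) show ?thesis by simp
qed

lemma spanning_treeI_card:
  assumes "finite V" "K \<subseteq> edges_on V" "connected_by V K" "card K < card V"
  shows "spanning_tree V K"
  unfolding spanning_tree_def
proof (intro conjI ballI notI assms(2,3))
  fix e assume "e \<in> K" "connected_by V (K - {e})"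
  have "K - {e} \<subseteq> edges_on V" using assms(2) by blast
  then have "card V \<le> card (K - {e}) + 1"
    using \<open>connected_by V (K - {e})\<close> by (rule connected_by_card_le[OF assms(1)])
  moreover have "card K = Suc (card (K - {e}))"
    using card.remove[OF finite_subset[OF assms(2) finite_edges_on[OF assms(1)]] \<open>e \<in> K\<close>] .
  ultimately show False using assms(4) by linarith
qed

section \<open>Contracting the parts of the initial forest\<close>

locale metric_forest =
  fixes X :: "'a set" and d :: "'a \<Rightarrow> 'a \<Rightarrow> real" and t :: nat
    and P :: "nat \<Rightarrow> 'a set" and T :: "nat \<Rightarrow> 'a set set"
  assumes finite_X: "finite X" and metric: "metric_on X d"
    and parts_nonempty: "\<forall>i<t. P i \<noteq> {}"
    and parts_disjoint: "\<forall>i<t. \<forall>j<t. i \<noteq> j \<longrightarrow> P i \<inter> P j = {}"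
    and parts_cover: "(\<Union>i<t. P i) = X"
    and part_trees: "\<forall>i<t. spanning_tree (P i) (T i)"
begin

abbreviation Et :: "'a set set" where
  "Et \<equiv> \<Union>i<t. T i"

definition part_of :: "'a \<Rightarrow> nat" where
  "part_of x = (SOME i. i < t \<and> x \<in> P i)"

lemma part_subset: "i < t \<Longrightarrow> P i \<subseteq> X"
  using parts_cover by blast

lemma finite_part: "i < t \<Longrightarrow> finite (P i)"
  using finite_subset[OF part_subset finite_X] .

lemma part_of:
  assumes "x \<in> X"
  shows "part_of x < t \<and> x \<in> P (part_of x)"
proof -
  have "\<exists>i. i < t \<and> x \<in> P i" using parts_cover assms by blast
  then show ?thesis unfolding part_of_def by (rule someI_ex)
qed

lemma part_of_eq: "i < t \<Longrightarrow> x \<in> P i \<Longrightarrow> part_of x = i"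
  using part_of[of x] part_subset parts_disjoint by blast

lemma part_tree_edges: "i < t \<Longrightarrow> T i \<subseteq> edges_on (P i)"
  using part_trees unfolding spanning_tree_def by blast

lemma part_tree_edges_on_X: "i < t \<Longrightarrow> T i \<subseteq> edges_on X"
  using part_tree_edges edges_on_mono[OF part_subset] by blast

lemma finite_part_tree: "i < t \<Longrightarrow> finite (T i)"
  using finite_subset[OF part_tree_edges finite_edges_on[OF finite_part]] .

lemma part_tree_rtrancl: "i < t \<Longrightarrow> x \<in> P i \<Longrightarrow> y \<in> P i \<Longrightarrow> (x, y) \<in> (adj (T i))\<^sup>*"
  using part_trees unfolding spanning_tree_def connected_by_def by blast

lemma dist_le_part_tree_weight:
  "i < t \<Longrightarrow> x \<in> P i \<Longrightarrow> y \<in> P i \<Longrightarrow> d x y \<le> weight (edge_cost d) (T i)"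
  using rtrancl_adj_dist_le_weight[OF metric finite_part_tree part_tree_edges_on_X]
    part_subset part_tree_rtrancl by blast

lemma Et_edges_on: "Et \<subseteq> edges_on X"
  using part_tree_edges_on_X by blast

lemma finite_Et: "finite Et"
  using finite_part_tree by blast

lemma part_of_Et:
  assumes "{x, y} \<in> Et"
  shows "part_of x = part_of y"
proof -
  obtain k where "k < t" "{x, y} \<in> T k" using assms by blast
  then have "{x, y} \<subseteq> P k" using part_tree_edges edges_on_subset by blast
  then show ?thesis using part_of_eq[OF \<open>k < t\<close>] by simp
qed

lemma part_trees_disjoint:
  assumes "i < t" "j < t" "i \<noteq> j"
  shows "T i \<inter> T j = {}"
proof (rule ccontr)
  assume "T i \<inter> T j \<noteq> {}"
  then obtain e where "e \<in> edges_on (P i)" "e \<in> edges_on (P j)"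
    using part_tree_edges assms(1,2) by blast
  then obtain u where "u \<in> P i" "u \<in> P j" by (blast elim: edges_onE dest: edges_on_subset)
  then show False using parts_disjoint assms by blast
qed

lemma weight_Et: "weight c Et = (\<Sum>i<t. weight c (T i))"
  unfolding weight_def by (rule sum.UNION_disjoint) (auto simp: finite_part_tree part_trees_disjoint)

lemma card_Et: "card Et + t = card X"
proof -
  have "card Et = (\<Sum>i<t. card (T i))"
    by (rule card_UN_disjoint) (auto simp: finite_part_tree part_trees_disjoint)
  moreover have "card X = (\<Sum>i<t. card (P i))"
    unfolding parts_cover[symmetric] by (rule card_UN_disjoint) (use finite_part parts_disjoint in auto)
  moreover have "(\<Sum>i<t. card (P i)) = (\<Sum>i<t. card (T i) + 1)"
    using spanning_tree_card[OF finite_part] parts_nonempty part_trees by simp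
  ultimately show ?thesis by (simp add: sum_Suc)
qed

lemma union_find_inv_connected_parts:
  assumes inv: "union_find_inv {0..<t} part_of c \<omega> a F \<rho> J" and "connected_by X (Et \<union> F)"
  shows "connected_by {0..<t} J"
proof (cases "t = 0")
  case False
  have "\<rho> (part_of x) = \<rho> (part_of y)" if "{x, y} \<in> Et \<union> F" for x y
  proof (cases "{x, y} \<in> Et")
    case True
    then show ?thesis using part_of_Et by simp
  qed (use that union_find_invD(5)[OF inv] in blast)
  then have same_root: "\<rho> (part_of x) = \<rho> (part_of y)" if "(x, y) \<in> (adj (Et \<union> F))\<^sup>*" for x y
    using const_on_rtrancl[OF that, of "\<lambda>x. \<rho> (part_of x)"] unfolding adj_def by blast
  have "\<rho> i = \<rho> 0" if i: "i \<in> {0..<t}" for i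
  proof -
    have "i < t" "0 < t" using i False by auto
    then obtain x y where xy: "x \<in> P i" "y \<in> P 0" using parts_nonempty by blast
    then have "x \<in> X" "y \<in> X" using part_subset \<open>i < t\<close> \<open>0 < t\<close> by blast+
    then have "(x, y) \<in> (adj (Et \<union> F))\<^sup>*" using assms(2) unfolding connected_by_def by blast
    then have "\<rho> (part_of x) = \<rho> (part_of y)" by (rule same_root)
    then show ?thesis using part_of_eq[OF \<open>i < t\<close> xy(1)] part_of_eq[OF \<open>0 < t\<close> xy(2)] by simp
  qed
  moreover have "0 \<in> {0..<t}" using False by simp
  ultimately show ?thesis using union_find_inv_single_root(1)[OF inv finite_atLeastLessThan] by blast
qed (simp add: connected_by_def)

lemma contracted_forest_exists:
  fixes \<omega> :: "nat set \<Rightarrow> real"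
  assumes charge: "\<forall>p\<in>X. \<forall>q\<in>X. part_of p \<noteq> part_of q \<longrightarrow>
                     \<omega> {part_of p, part_of q} \<le> d p q + weight (edge_cost d) (T (part_of q))"
    and F: "F \<subseteq> edges_on X" "connected_by X (Et \<union> F)"
  obtains J where "J \<subseteq> edges_on {0..<t}" "connected_by {0..<t} J"
    "weight \<omega> J \<le> weight (edge_cost d) F + weight (edge_cost d) Et"
proof -
  define c where "c i = weight (edge_cost d) (T i)" for i
  have finF: "finite F" using finite_subset[OF F(1) finite_edges_on[OF finite_X]] .
  have parts: "part_of ` X \<subseteq> {0..<t}" using part_of by auto
  have nonneg: "\<forall>e\<in>F. 0 \<le> edge_cost d e" using F(1) edge_cost_nonneg[OF metric] by blast
  have charge': "\<forall>p\<in>X. \<forall>q\<in>X. part_of p \<noteq> part_of q \<longrightarrow>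
      \<omega> {part_of p, part_of q} \<le> edge_cost d {p, q} + c (part_of q)"
  proof (intro ballI impI)
    fix p q assume "p \<in> X" "q \<in> X" "part_of p \<noteq> part_of q"
    then show "\<omega> {part_of p, part_of q} \<le> edge_cost d {p, q} + c (part_of q)"
      using charge edge_cost_metric[OF metric \<open>p \<in> X\<close> \<open>q \<in> X\<close>] by (auto simp: c_def)
  qed
  obtain \<rho> J where inv: "union_find_inv {0..<t} part_of c \<omega> (edge_cost d) F \<rho> J"
    using union_find_inv_exists[OF finite_atLeastLessThan finF F(1) parts nonneg charge'] by blast
  have conn: "connected_by {0..<t} J" using union_find_inv_connected_parts[OF inv F(2)] .
  have "(\<Sum>i\<in>{i\<in>{0..<t}. \<rho> i \<noteq> i}. c i) \<le> (\<Sum>i<t. c i)"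
    using weight_nonneg[OF metric part_tree_edges_on_X] by (intro sum_mono2) (auto simp: c_def)
  also have "\<dots> = weight (edge_cost d) Et" unfolding weight_Et c_def ..
  finally have "weight \<omega> J \<le> weight (edge_cost d) F + weight (edge_cost d) Et"
    using union_find_invD(9)[OF inv] by linarith
  with union_find_invD(7)[OF inv] conn show thesis by (rule that)
qed

lemma contracted_mst_weight_le:
  fixes \<omega> :: "nat set \<Rightarrow> real"
  assumes mst: "is_mst {0..<t} \<omega> H"
    and \<omega>_nonneg: "\<forall>e\<in>edges_on {0..<t}. 0 \<le> \<omega> e"
    and charge: "\<forall>p\<in>X. \<forall>q\<in>X. part_of p \<noteq> part_of q \<longrightarrow>
                   \<omega> {part_of p, part_of q} \<le> d p q + weight (edge_cost d) (T (part_of q))"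
    and F: "F \<subseteq> edges_on X" "connected_by X (Et \<union> F)"
  shows "weight \<omega> H \<le> weight (edge_cost d) F + weight (edge_cost d) Et"
proof -
  obtain J where J: "J \<subseteq> edges_on {0..<t}" "connected_by {0..<t} J"
    "weight \<omega> J \<le> weight (edge_cost d) F + weight (edge_cost d) Et"
    using contracted_forest_exists[OF charge F] .
  obtain J' where J': "J' \<subseteq> J" "spanning_tree {0..<t} J'"
    using connected_by_obtain_spanning_tree[OF _ J(1,2)] by blast
  have "weight \<omega> H \<le> weight \<omega> J'" using mst J'(2) unfolding is_mst_def by blast
  also have "\<dots> \<le> weight \<omega> J"
    unfolding weight_def using J(1) J'(1) \<omega>_nonneg finite_subset[OF J(1) finite_edges_on]
    by (intro sum_mono2) auto
  finally show ?thesis using J(3) by linarith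
qed

lemma connected_by_Et_Un_inter_part:
  assumes "connected_by X M"
  shows "connected_by X (Et \<union> (M - intra_edges P t M))"
proof -
  let ?G = "Et \<union> (M - intra_edges P t M)"
  have "(u, w) \<in> (adj ?G)\<^sup>*" if "{u, w} \<in> M" for u w
  proof (cases "{u, w} \<in> intra_edges P t M")
    case True
    then obtain k where "k < t" "u \<in> P k" "w \<in> P k" unfolding intra_edges_def by blast
    then have "(u, w) \<in> (adj (T k))\<^sup>*" by (rule part_tree_rtrancl)
    moreover have "T k \<subseteq> ?G" using \<open>k < t\<close> by blast
    ultimately show ?thesis using rtrancl_adj_mono by blast
  next
    case False
    with that have "(u, w) \<in> adj ?G" by (simp add: adj_def)
    then show ?thesis by (rule r_into_rtrancl)
  qed
  then have "adj M \<subseteq> (adj ?G)\<^sup>*" unfolding adj_def[of M] by blast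
  with assms show ?thesis by (rule connected_byI_subset_rtrancl)
qed

lemma intra_edges_weight_le:
  assumes "is_mst X (edge_cost d) M"
  shows "weight (edge_cost d) (intra_edges P t M) \<le> weight (edge_cost d) Et"
proof -
  let ?M' = "M - intra_edges P t M"
  have M: "M \<subseteq> edges_on X" "connected_by X M"
    using assms unfolding is_mst_def spanning_tree_def by auto
  have finM: "finite M" using finite_subset[OF M(1) finite_edges_on[OF finite_X]] .
  have G: "Et \<union> ?M' \<subseteq> edges_on X" "finite (Et \<union> ?M')" using Et_edges_on M(1) finite_Et finM by auto
  obtain K where K: "K \<subseteq> Et \<union> ?M'" "spanning_tree X K"
    using connected_by_obtain_spanning_tree[OF finite_X G(1) connected_by_Et_Un_inter_part[OF M(2)]] .
  have "weight (edge_cost d) M \<le> weight (edge_cost d) K"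
    using assms K(2) unfolding is_mst_def by blast
  also have "\<dots> \<le> weight (edge_cost d) (Et \<union> ?M')" using weight_mono[OF metric G(1) K(1) G(2)] .
  also have "\<dots> \<le> weight (edge_cost d) Et + weight (edge_cost d) ?M'"
    using weight_Un_le[OF metric Et_edges_on _ finite_Et] M(1) finM by blast
  also have "weight (edge_cost d) ?M' = weight (edge_cost d) M - weight (edge_cost d) (intra_edges P t M)"
    using finM by (rule weight_Diff) (auto simp: intra_edges_def)
  finally show ?thesis by linarith
qed

end

section \<open>The output of MultiRepMFC\<close>

locale multirep_run = metric_forest +
  fixes R :: "nat \<Rightarrow> 'a set" and pr :: "nat set \<Rightarrow> 'a set" and H :: "nat set set"
  assumes reps: "\<forall>i<t. R i \<noteq> {} \<and> R i \<subseteq> P i"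
    and run: "multirep_output d P R t pr H"
begin

abbreviation contracted_weight :: "nat set \<Rightarrow> real" where
  "contracted_weight \<equiv> edge_cost (rep_weight d P R)"

lemma H_mst: "is_mst {0..<t} contracted_weight H"
  using run unfolding multirep_output_def by blast

lemma H_edges: "H \<subseteq> edges_on {0..<t}"
  using H_mst unfolding is_mst_def spanning_tree_def by blast

lemma contracted_weight_doubleton: "contracted_weight {i, j} = rep_weight d P R i j"
  by (rule edge_cost_doubleton) (simp add: rep_weight_def min.commute)

lemma rep_weight_charge:
  assumes "p \<in> X" "q \<in> X"
  shows "rep_weight d P R (part_of p) (part_of q) \<le> d p q + weight (edge_cost d) (T (part_of q))"
proof -
  let ?i = "part_of p" and ?j = "part_of q"
  have i: "?i < t" "p \<in> P ?i" and j: "?j < t" "q \<in> P ?j" using part_of assms by auto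
  have "R ?j \<noteq> {}" "R ?j \<subseteq> P ?j" using reps j(1) by auto
  then obtain r where r: "r \<in> R ?j" "r \<in> P ?j" by blast
  have "rep_weight d P R ?i ?j \<le> setdist d (P ?i) (R ?j)" unfolding rep_weight_def by simp
  also have "\<dots> \<le> d p r"
    using setdist_le[OF finite_part[OF i(1)] finite_subset i(2) r(1)] \<open>R ?j \<subseteq> P ?j\<close> finite_part[OF j(1)] .
  also have "\<dots> \<le> d p q + d q r"
    using metric_on_triangle[OF metric assms] part_subset[OF j(1)] r(2) by blast
  also have "d q r \<le> weight (edge_cost d) (T ?j)" using dist_le_part_tree_weight[OF j r(2)] .
  finally show ?thesis by simp
qed

lemma contracted_weight_charge:
  "\<forall>p\<in>X. \<forall>q\<in>X. part_of p \<noteq> part_of q \<longrightarrow>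
     contracted_weight {part_of p, part_of q} \<le> d p q + weight (edge_cost d) (T (part_of q))"
  using rep_weight_charge by (simp add: contracted_weight_doubleton)

lemma contracted_weight_nonneg: "\<forall>e\<in>edges_on {0..<t}. 0 \<le> contracted_weight e"
proof
  fix e assume "e \<in> edges_on {0..<t}"
  then obtain i j where "i < t" "j < t" "e = {i, j}" by (auto elim: edges_onE)
  moreover have "0 \<le> setdist d (P i) (R j)" if "i < t" "j < t" for i j
  proof -
    have R: "R j \<subseteq> P j" "R j \<noteq> {}" using reps that(2) by auto
    show ?thesis
      using setdist_nonneg[OF metric part_subset[OF that(1)] _ finite_part[OF that(1)]
          finite_subset[OF R(1) finite_part[OF that(2)]] _ R(2)]
        R(1) part_subset[OF that(2)] parts_nonempty that(1) by blast
  qed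
  ultimately show "0 \<le> contracted_weight e"
    by (simp add: contracted_weight_doubleton rep_weight_def)
qed

lemma recorded_pairE:
  assumes "h \<in> H"
  obtains i j x y where "i < t" "j < t" "i \<noteq> j" "h = {i, j}" "pr h = {x, y}"
    "x \<in> P i" "y \<in> P j" "d x y = rep_weight d P R i j"
proof -
  obtain i j where ij: "i < t" "j < t" "i \<noteq> j" "h = {i, j}"
    using H_edges assms by (auto elim!: edges_onE)
  then obtain x y where xy: "pr {i, j} = {x, y}" "x \<in> P i \<and> y \<in> R j \<or> x \<in> P j \<and> y \<in> R i"
    "d x y = rep_weight d P R i j"
    using run unfolding multirep_output_def valid_recorded_pairs_def by blast
  show thesis
  proof (cases "x \<in> P i \<and> y \<in> R j")
    case True
    then show thesis using that[of i j x y] ij xy reps by blast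
  next
    case False
    then have "x \<in> P j" "y \<in> P i" using xy(2) reps ij by blast+
    moreover have "h = {j, i}" "d x y = rep_weight d P R j i"
      using ij(4) xy(3) by (auto simp: rep_weight_def min.commute)
    ultimately show thesis using that[of j i x y] ij xy(1) by auto
  qed
qed

lemma recorded_pair:
  assumes "h \<in> H"
  shows "pr h \<in> edges_on X" "part_of ` pr h = h" "edge_cost d (pr h) = contracted_weight h"
    and "pr h \<notin> Et"
proof -
  obtain i j x y where D: "i < t" "j < t" "i \<noteq> j" "h = {i, j}" "pr h = {x, y}"
    "x \<in> P i" "y \<in> P j" "d x y = rep_weight d P R i j"
    using recorded_pairE[OF assms] .
  have X: "x \<in> X" "y \<in> X" using part_subset D by auto
  have parts: "part_of x = i" "part_of y = j" using part_of_eq D by auto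
  then show "pr h \<in> edges_on X" using X D(3,5) unfolding edges_on_def by auto
  show "part_of ` pr h = h" using parts D(4,5) by simp
  have "edge_cost d (pr h) = d x y" unfolding D(5) by (rule edge_cost_metric[OF metric X])
  then show "edge_cost d (pr h) = contracted_weight h"
    unfolding D(4,8) contracted_weight_doubleton .
  show "pr h \<notin> Et" using part_of_Et parts D(3,5) by auto
qed

lemma inj_on_pr: "inj_on pr H"
  by (rule inj_on_inverseI[where g = "image part_of"]) (rule recorded_pair(2))

lemma output_weight:
  "weight (edge_cost d) (Et \<union> pr ` H) = weight (edge_cost d) Et + weight contracted_weight H"
proof -
  have finH: "finite H" using finite_subset[OF H_edges finite_edges_on] by blast
  have "weight (edge_cost d) (Et \<union> pr ` H) = weight (edge_cost d) Et + weight (edge_cost d) (pr ` H)"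
    unfolding weight_def using finite_Et finH recorded_pair(4) by (intro sum.union_disjoint) auto
  also have "weight (edge_cost d) (pr ` H) = weight contracted_weight H"
    unfolding weight_def sum.reindex[OF inj_on_pr] using recorded_pair(3) by simp
  finally show ?thesis .
qed

lemma recorded_pair_adj:
  assumes "{i, j} \<in> H"
  obtains u w where "u \<in> P i" "w \<in> P j" "(u, w) \<in> adj (pr ` H)"
proof -
  obtain i' j' x y where D: "i' < t" "j' < t" "i' \<noteq> j'" "{i, j} = {i', j'}" "pr {i, j} = {x, y}"
    "x \<in> P i'" "y \<in> P j'" "d x y = rep_weight d P R i' j'"
    using recorded_pairE[OF assms] .
  have "{x, y} \<in> pr ` H" using imageI[OF assms, of pr] D(5) by simp
  then have xy: "(x, y) \<in> adj (pr ` H)" "(y, x) \<in> adj (pr ` H)"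
    unfolding adj_def by (simp_all add: insert_commute)
  consider "i = i'" "j = j'" | "i = j'" "j = i'" using D(4) by (auto simp: doubleton_eq_iff)
  then show thesis
  proof cases
    case 1
    then show thesis using that[of x y] D(6,7) xy(1) by blast
  next
    case 2
    then show thesis using that[of y x] D(6,7) xy(2) by blast
  qed
qed

lemma output_part_rtrancl:
  assumes "k < t" "u \<in> P k" "w \<in> P k"
  shows "(u, w) \<in> (adj (Et \<union> pr ` H))\<^sup>*"
proof -
  have "T k \<subseteq> Et \<union> pr ` H" using assms(1) by blast
  then show ?thesis using rtrancl_adj_mono part_tree_rtrancl[OF assms] by blast
qed

lemma output_rtrancl:
  assumes "(i, j) \<in> (adj H)\<^sup>*" "i < t" "x \<in> P i" "z \<in> P j"
  shows "(x, z) \<in> (adj (Et \<union> pr ` H))\<^sup>*"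
  using assms(1,4)
proof (induction arbitrary: z rule: rtrancl_induct)
  case base
  then show ?case by (rule output_part_rtrancl[OF assms(2,3)])
next
  case (step j k)
  then have jk: "{j, k} \<in> H" by (simp add: adj_def)
  then have "{j, k} \<in> edges_on {0..<t}" using H_edges by blast
  from doubleton_in_edges_on[OF this] have "k < t" by simp
  obtain u w where uw: "u \<in> P j" "w \<in> P k" "(u, w) \<in> adj (pr ` H)" using recorded_pair_adj[OF jk] .
  have "(u, w) \<in> adj (Et \<union> pr ` H)" using uw(3) unfolding adj_def by blast
  with step.IH[OF uw(1)] have "(x, w) \<in> (adj (Et \<union> pr ` H))\<^sup>*" by (rule rtrancl_into_rtrancl)
  then show ?case using output_part_rtrancl[OF \<open>k < t\<close> uw(2) step.prems] by (rule rtrancl_trans)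
qed

lemma output_connected: "connected_by X (Et \<union> pr ` H)"
  unfolding connected_by_def
proof (intro ballI)
  fix x z assume "x \<in> X" "z \<in> X"
  then have "(part_of x, part_of z) \<in> (adj H)\<^sup>*"
    using part_of H_mst unfolding is_mst_def spanning_tree_def connected_by_def by simp
  then show "(x, z) \<in> (adj (Et \<union> pr ` H))\<^sup>*"
    using output_rtrancl part_of \<open>x \<in> X\<close> \<open>z \<in> X\<close> by blast
qed

lemma output_spanning_tree: "spanning_tree X (Et \<union> pr ` H)"
proof (cases "t = 0")
  case True
  then have "X = {}" using parts_cover by simp
  then show ?thesis
    using Et_edges_on recorded_pair(1) unfolding spanning_tree_def connected_by_def edges_on_def by auto
next
  case False
  have disj: "Et \<inter> pr ` H = {}" using recorded_pair(4) by blast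
  have "card H + 1 = t"
    using spanning_tree_card[of "{0..<t}" H] H_mst False unfolding is_mst_def by simp
  then have "card (Et \<union> pr ` H) + 1 = card X"
    using card_Un_disjoint[OF finite_Et _ disj] card_image[OF inj_on_pr] card_Et
      finite_subset[OF H_edges finite_edges_on] by simp
  then show ?thesis
    using Et_edges_on recorded_pair(1) output_connected
    by (intro spanning_treeI_card[OF finite_X]) auto
qed

lemma output_weight_le_completion:
  assumes "spanning_tree X F" "Et \<subseteq> F"
  shows "weight (edge_cost d) (Et \<union> pr ` H) \<le> 2 * weight (edge_cost d) F"
proof -
  have F: "F \<subseteq> edges_on X" "connected_by X F" using assms(1) unfolding spanning_tree_def by auto
  have finF: "finite F" using finite_subset[OF F(1) finite_edges_on[OF finite_X]] .
  have "F - Et \<subseteq> edges_on X" "connected_by X (Et \<union> (F - Et))"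
    using F assms(2) Un_Diff_cancel2[of F Et] sup.absorb2[OF assms(2)] by auto
  then have "weight contracted_weight H \<le> weight (edge_cost d) (F - Et) + weight (edge_cost d) Et"
    by (rule contracted_mst_weight_le[OF H_mst contracted_weight_nonneg contracted_weight_charge])
  moreover have "weight (edge_cost d) (F - Et) = weight (edge_cost d) F - weight (edge_cost d) Et"
    using finF assms(2) by (rule weight_Diff)
  moreover have "weight (edge_cost d) Et \<le> weight (edge_cost d) F"
    using weight_mono[OF metric F(1) assms(2) finF] .
  ultimately show ?thesis using output_weight by linarith
qed

lemma output_weight_le_mst:
  assumes pos: "0 < Max {weight (edge_cost d) (intra_edges P t M) | M. is_mst X (edge_cost d) M}"
    and M: "is_mst X (edge_cost d) M"
  shows "weight (edge_cost d) (Et \<union> pr ` H) \<le> 2 * overlap X d P t Et * weight (edge_cost d) M"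
proof -
  let ?w = "weight (edge_cost d)"
  let ?B = "{?w (intra_edges P t M) | M. is_mst X (edge_cost d) M}"
  have "finite ?B" using finite_msts[OF finite_X] by (simp add: setcompr_eq_image)
  moreover have "?B \<noteq> {}" using M by blast
  ultimately have "Max ?B \<in> ?B" by (rule Max_in)
  then obtain M0 where M0: "is_mst X (edge_cost d) M0" "?w (intra_edges P t M0) = Max ?B" by auto
  have M0X: "M0 \<subseteq> edges_on X" "connected_by X M0"
    using M0(1) unfolding is_mst_def spanning_tree_def by auto
  have finM0: "finite M0" using finite_subset[OF M0X(1) finite_edges_on[OF finite_X]] .
  let ?F = "M0 - intra_edges P t M0"
  have wF: "?w ?F = ?w M0 - Max ?B"
    using weight_Diff[OF finM0, of "intra_edges P t M0"] M0(2) by (auto simp: intra_edges_def)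
  have "?F \<subseteq> edges_on X" using M0X(1) by blast
  then have "weight contracted_weight H \<le> ?w ?F + ?w Et"
    using connected_by_Et_Un_inter_part[OF M0X(2)]
    by (rule contracted_mst_weight_le[OF H_mst contracted_weight_nonneg contracted_weight_charge])
  then have "?w (Et \<union> pr ` H) \<le> 2 * ?w Et + ?w M0 - Max ?B" using output_weight wF by linarith
  moreover have "Max ?B \<le> ?w Et" using intra_edges_weight_le[OF M0(1)] M0(2) by simp
  moreover have "Max ?B \<le> ?w M0" using wF weight_nonneg[OF metric \<open>?F \<subseteq> edges_on X\<close>] by linarith
  moreover have "?w M = ?w M0" using M M0(1) unfolding is_mst_def by (meson order_antisym)
  ultimately show ?thesis unfolding overlap_def using le_two_ratio_mult[OF pos] by simp
qed

end

theorem corollary1: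
  fixes X :: "'a set" and d :: "'a \<Rightarrow> 'a \<Rightarrow> real"
    and t :: nat and P :: "nat \<Rightarrow> 'a set" and T :: "nat \<Rightarrow> 'a set set"
    and r :: "nat \<Rightarrow> 'a" and pr :: "nat set \<Rightarrow> 'a set" and H :: "nat set set"
  assumes "finite X" and "metric_on X d"
    and "\<forall>i<t. P i \<noteq> {}"
    and "\<forall>i<t. \<forall>j<t. i \<noteq> j \<longrightarrow> P i \<inter> P j = {}"
    and "(\<Union>i<t. P i) = X"
    and "\<forall>i<t. spanning_tree (P i) (T i)"
    and "\<forall>i<t. r i \<in> P i"
    and "multirep_output d P (\<lambda>i. {r i}) t pr H"
  shows "spanning_tree X ((\<Union>i<t. T i) \<union> pr ` H) \<and> (\<Union>i<t. T i) \<subseteq> (\<Union>i<t. T i) \<union> pr ` H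
     \<and> (\<forall>F. spanning_tree X F \<and> (\<Union>i<t. T i) \<subseteq> F \<longrightarrow>
           weight (edge_cost d) ((\<Union>i<t. T i) \<union> pr ` H) \<le> 2 * weight (edge_cost d) F)
     \<and> (Max {weight (edge_cost d) (intra_edges P t M) | M. is_mst X (edge_cost d) M} > 0 \<longrightarrow>
         (\<forall>M. is_mst X (edge_cost d) M \<longrightarrow>
           weight (edge_cost d) ((\<Union>i<t. T i) \<union> pr ` H)
             \<le> 2 * overlap X d P t (\<Union>i<t. T i) * weight (edge_cost d) M))"
proof -
  interpret multirep_run X d t P T "\<lambda>i. {r i}" pr H
    using assms by unfold_locales auto
  show ?thesis
    using output_spanning_tree output_weight_le_completion output_weight_le_mst by blast
qed

end
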